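(* Let $p(\cdot)\in\mathcal{P}(\mathbb{R}^n)$, $1\le q,\alpha\le\infty$, with $p(x)\le\alpha\le q$ for all $x$. For any constant $\rho\in(0,\infty)$ and $r>0$, $$\Big\|\,\|f\chi_{B(\cdot,r)}\|_{L^{p(\cdot)}}\Big\|_{L^q}\sim\Big\|\,\|f\chi_{B(\cdot,\rho r)}\|_{L^{p(\cdot)}}\Big\|_{L^q},$$ where the positive equivalence constants are independent of $f$.
   Context: $\mathcal{P}(\mathbb{R}^n)$: measurable $p(\cdot):\mathbb{R}^n\to[1,\infty)$ with $\operatorname{ess\,inf}p>1$, $\operatorname{ess\,sup}p<\infty$. $\|f\|_{L^{p(\cdot)}}=\inf\{\lambda>0:\int(|f(x)|/\lambda)^{p(x)}dx\le1\}$. $B(x,r)$ is the open ball; the outer $L^q$ norm is taken in the center variable $x$ of $x\mapsto\|f\chi_{B(x,r)}\|_{L^{p(\cdot)}}$. *)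

theory Defs
  imports "HOL-Analysis.Analysis" "HOL-Probability.Essential_Supremum"
begin

text \<open>Variable exponents: the class P(R^n). ess inf p > 1 and ess sup p < infinity,
  written out as almost-everywhere bounds.\<close>
definition var_exp :: "('a::euclidean_space \<Rightarrow> real) \<Rightarrow> bool" where
  "var_exp p \<longleftrightarrow> p \<in> borel_measurable lebesgue \<and> (\<forall>x. 1 \<le> p x)
     \<and> (\<exists>c>1. AE x in lebesgue. c \<le> p x) \<and> (\<exists>C. AE x in lebesgue. p x \<le> C)"

text \<open>Luxemburg norm of L^{p(.)}, valued in [0,infinity] (Inf of the empty set is infinity).\<close>
definition var_norm :: "('a::euclidean_space \<Rightarrow> real) \<Rightarrow> ('a \<Rightarrow> real) \<Rightarrow> ennreal" where
  "var_norm p f = Inf (ennreal ` {lam. lam > 0 \<and>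
      (\<integral>\<^sup>+ x. ennreal ((\<bar>f x\<bar> / lam) powr p x) \<partial>lebesgue) \<le> 1})"

definition ennpow :: "ennreal \<Rightarrow> real \<Rightarrow> ennreal" where
  "ennpow a s = (if a = top then top else ennreal (enn2real a powr s))"

definition Lq_norm :: "ennreal \<Rightarrow> ('a::euclidean_space \<Rightarrow> ennreal) \<Rightarrow> ennreal" where
  "Lq_norm q g = (if q = top then esssup lebesgue g
     else ennpow (\<integral>\<^sup>+ x. ennpow (g x) (enn2real q) \<partial>lebesgue) (1 / enn2real q))"

definition amalg_norm :: "('a::euclidean_space \<Rightarrow> real) \<Rightarrow> ennreal \<Rightarrow> real \<Rightarrow> ('a \<Rightarrow> real) \<Rightarrow> ennreal" where
  "amalg_norm p q r f = Lq_norm q (\<lambda>x. var_norm p (\<lambda>y. f y * indicator (ball x r) y))"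

end

theory Submission
  imports Defs
begin

text \<open>Cover the closed ball of radius \<open>t\<close> around the origin by \<open>N\<close> balls of radius \<open>s\<close>
  centred at the points of a finite set \<open>Z\<close>. Then pointwise
  \<open>\<bar>f\<bar> \<chi>\<^bsub>B(x,t)\<^esub> \<le> \<Sum>\<^bsub>z\<in>Z\<^esub> \<bar>f\<bar> \<chi>\<^bsub>B(x+z,s)\<^esub>\<close>. The Luxemburg norm of a sum of \<open>N\<close> functions is at
  most \<open>N\<^sup>2\<close> times the sum of their norms, and the \<open>L\<^sup>q\<close> norm of a sum of \<open>N\<close> translates of a
  function is at most \<open>N\<^sup>2\<close> times its norm; so the amalgam quantity at radius \<open>t\<close> is at most
  \<open>N\<^sup>4\<close> times the one at radius \<open>s\<close>, for any two radii. The local norm is measurable in the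
  centre because, by Fatou's lemma, it is lower semicontinuous there.\<close>

section \<open>Elementary power inequalities\<close>

lemma finite_obtain_max:
  fixes u :: "'b \<Rightarrow> 'c::linorder"
  assumes "finite Z" "Z \<noteq> {}"
  obtains z0 where "z0 \<in> Z" "\<And>z. z \<in> Z \<Longrightarrow> u z \<le> u z0"
proof -
  have "Max (u ` Z) \<in> u ` Z" using assms by (intro Max_in) auto
  then obtain z0 where "z0 \<in> Z" "u z0 = Max (u ` Z)" by auto
  then show thesis using assms by (intro that[of z0]) auto
qed

lemma powr_sum_le_card_powr_sum:
  fixes u :: "'b \<Rightarrow> real"
  assumes Z: "finite Z" and u: "\<And>z. z \<in> Z \<Longrightarrow> 0 \<le> u z" and p: "0 \<le> p"
  shows "(\<Sum>z\<in>Z. u z) powr p \<le> real (card Z) powr p * (\<Sum>z\<in>Z. u z powr p)"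
proof (cases "Z = {}")
  case False
  obtain z0 where z0: "z0 \<in> Z" "\<And>z. z \<in> Z \<Longrightarrow> u z \<le> u z0"
    using finite_obtain_max[OF Z False] by blast
  have "(\<Sum>z\<in>Z. u z) \<le> real (card Z) * u z0"
    using sum_bounded_above[of Z u "u z0"] z0 by auto
  then have "(\<Sum>z\<in>Z. u z) powr p \<le> (real (card Z) * u z0) powr p"
    using u p by (intro powr_mono2 sum_nonneg) auto
  also have "\<dots> = real (card Z) powr p * u z0 powr p"
    using u z0 by (simp add: powr_mult)
  also have "\<dots> \<le> real (card Z) powr p * (\<Sum>z\<in>Z. u z powr p)"
    using z0 Z by (intro mult_left_mono member_le_sum) auto
  finally show ?thesis .
qed simp

lemma powr_div_card_sq_le:
  fixes v :: "'b \<Rightarrow> real"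
  assumes Z: "finite Z" "Z \<noteq> {}" and v: "\<And>z. z \<in> Z \<Longrightarrow> 0 \<le> v z"
    and w: "0 \<le> w" "w \<le> (\<Sum>z\<in>Z. v z)" and p: "1 \<le> p"
  shows "(w / real (card Z)^2) powr p \<le> (\<Sum>z\<in>Z. v z powr p) / real (card Z)"
proof -
  define N where "N = real (card Z)"
  have N: "N \<ge> 1" using Z unfolding N_def by (simp add: Suc_leI card_gt_0_iff)
  have "(w / N^2) powr p \<le> ((\<Sum>z\<in>Z. v z) / N^2) powr p"
    using w p by (intro powr_mono2 divide_right_mono) auto
  also have "\<dots> = ((\<Sum>z\<in>Z. v z) powr p / N powr p) / N powr p"
    using N v by (simp add: powr_divide power2_eq_square powr_mult sum_nonneg)
  also have "(\<Sum>z\<in>Z. v z) powr p / N powr p \<le> (\<Sum>z\<in>Z. v z powr p)"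
    using powr_sum_le_card_powr_sum[of Z v p] Z v N p
    unfolding N_def by (simp add: pos_divide_le_eq mult.commute)
  then have "((\<Sum>z\<in>Z. v z) powr p / N powr p) / N powr p \<le> (\<Sum>z\<in>Z. v z powr p) / N powr p"
    using N by (intro divide_right_mono) auto
  also have "\<dots> \<le> (\<Sum>z\<in>Z. v z powr p) / N"
    using N p powr_mono[of 1 p N] by (intro divide_left_mono sum_nonneg) auto
  finally show ?thesis unfolding N_def .
qed

lemma ennpow_mono:
  assumes "a \<le> b" "0 \<le> s"
  shows "ennpow a s \<le> ennpow b s"
proof (cases "b = top")
  case False
  then have "a \<noteq> top" using assms top_unique by auto
  moreover have "enn2real a \<le> enn2real b"
    using assms False by (intro enn2real_mono) (auto simp: top.not_eq_extremum)
  ultimately show ?thesis using False assms unfolding ennpow_def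
    by (auto intro!: ennreal_leI powr_mono2)
qed (simp add: ennpow_def)

lemma ennpow_cmult:
  assumes "0 < c" "0 < s"
  shows "ennpow (ennreal c * a) s = ennreal (c powr s) * ennpow a s"
proof (cases "a = top")
  case False
  then have "ennreal c * a \<noteq> top" using assms by (simp add: ennreal_mult_eq_top_iff)
  moreover have "enn2real (ennreal c * a) = c * enn2real a" using assms by (simp add: enn2real_mult)
  ultimately show ?thesis using False assms unfolding ennpow_def
    by (simp add: powr_mult ennreal_mult)
qed (use assms in \<open>simp add: ennpow_def ennreal_mult_top\<close>)

lemma borel_measurable_ennpow [measurable]:
  assumes [measurable]: "F \<in> borel_measurable M"
  shows "(\<lambda>x. ennpow (F x) s) \<in> borel_measurable M"
  unfolding ennpow_def by measurable

lemma ennpow_sum_le_card_powr_sum: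
  assumes Z: "finite Z" "Z \<noteq> {}" and s: "0 < s"
  shows "ennpow (\<Sum>z\<in>Z. a z) s \<le> ennreal (real (card Z) powr s) * (\<Sum>z\<in>Z. ennpow (a z) s)"
proof -
  obtain z0 where z0: "z0 \<in> Z" "\<And>z. z \<in> Z \<Longrightarrow> a z \<le> a z0"
    using finite_obtain_max[OF Z] by blast
  have N: "real (card Z) > 0" using Z by (simp add: card_gt_0_iff)
  have "(\<Sum>z\<in>Z. a z) \<le> of_nat (card Z) * a z0"
    using sum_bounded_above[of Z a "a z0"] z0 by auto
  also have "\<dots> = ennreal (real (card Z)) * a z0"
    by (simp add: ennreal_of_nat_eq_real_of_nat)
  finally have "ennpow (\<Sum>z\<in>Z. a z) s \<le> ennpow (ennreal (real (card Z)) * a z0) s"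
    using s by (intro ennpow_mono) auto
  also have "\<dots> = ennreal (real (card Z) powr s) * ennpow (a z0) s"
    using N s by (rule ennpow_cmult)
  also have "\<dots> \<le> ennreal (real (card Z) powr s) * (\<Sum>z\<in>Z. ennpow (a z) s)"
    using z0 Z by (intro mult_left_mono member_le_sum) auto
  finally show ?thesis .
qed

section \<open>The Luxemburg norm\<close>

definition modular :: "('a::euclidean_space \<Rightarrow> real) \<Rightarrow> ('a \<Rightarrow> real) \<Rightarrow> real \<Rightarrow> ennreal" where
  "modular p g lam = (\<integral>\<^sup>+ x. ennreal ((\<bar>g x\<bar> / lam) powr p x) \<partial>lebesgue)"

lemma var_norm_eq_Inf_modular:
  "var_norm p g = Inf (ennreal ` {lam. lam > 0 \<and> modular p g lam \<le> 1})"
  unfolding var_norm_def modular_def ..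

lemma var_norm_le:
  assumes "lam > 0" "modular p g lam \<le> 1"
  shows "var_norm p g \<le> ennreal lam"
  unfolding var_norm_eq_Inf_modular using assms by (intro Inf_lower) auto

lemma modular_antimono:
  assumes "0 < lam" "lam \<le> a" "\<And>x. 0 \<le> p x"
  shows "modular p g a \<le> modular p g lam"
  unfolding modular_def
proof (intro nn_integral_mono ennreal_leI)
  fix x
  have "\<bar>g x\<bar> / a \<le> \<bar>g x\<bar> / lam" using assms by (intro divide_left_mono) auto
  then show "(\<bar>g x\<bar> / a) powr p x \<le> (\<bar>g x\<bar> / lam) powr p x"
    using assms by (intro powr_mono2) auto
qed

lemma var_norm_less_imp_modular_le:
  assumes "var_norm p g < ennreal a" "\<And>x. 0 \<le> p x"
  shows "0 < a" "modular p g a \<le> 1"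
proof -
  from assms(1) obtain lam where lam: "lam > 0" "modular p g lam \<le> 1" "ennreal lam < ennreal a"
    unfolding var_norm_eq_Inf_modular by (auto simp: Inf_less_iff)
  then have "lam < a" by (simp add: ennreal_less_iff)
  then show "0 < a" "modular p g a \<le> 1"
    using lam modular_antimono[of lam a p g] assms(2) by auto
qed

lemma modular_le_average_modular:
  fixes h :: "'a::euclidean_space \<Rightarrow> real" and g :: "'b \<Rightarrow> 'a \<Rightarrow> real"
  assumes Z: "finite Z" "Z \<noteq> {}" and p1: "\<And>x. 1 \<le> p x" and pm: "p \<in> borel_measurable lebesgue"
    and gm: "\<And>z. z \<in> Z \<Longrightarrow> g z \<in> borel_measurable lebesgue"
    and h: "\<And>y. \<bar>h y\<bar> \<le> (\<Sum>z\<in>Z. \<bar>g z y\<bar>)" and a: "0 < a"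
  shows "modular p h (real (card Z)^2 * a) \<le> ennreal (1 / real (card Z)) * (\<Sum>z\<in>Z. modular p (g z) a)"
proof -
  define N where "N = real (card Z)"
  have N1: "N \<ge> 1" using Z unfolding N_def by (simp add: Suc_leI card_gt_0_iff)
  have pointwise: "ennreal ((\<bar>h y\<bar> / (N^2 * a)) powr p y)
      \<le> ennreal (1 / N) * (\<Sum>z\<in>Z. ennreal ((\<bar>g z y\<bar> / a) powr p y))" for y
  proof -
    have "\<bar>h y\<bar> / a \<le> (\<Sum>z\<in>Z. \<bar>g z y\<bar> / a)"
      using h[of y] a by (simp add: sum_divide_distrib[symmetric] divide_right_mono)
    then have "(\<bar>h y\<bar> / a / N^2) powr p y \<le> (\<Sum>z\<in>Z. (\<bar>g z y\<bar> / a) powr p y) / N"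
      unfolding N_def using Z a p1 by (intro powr_div_card_sq_le) auto
    then have "ennreal ((\<bar>h y\<bar> / (N^2 * a)) powr p y) \<le> ennreal (1 / N * (\<Sum>z\<in>Z. (\<bar>g z y\<bar> / a) powr p y))"
      by (intro ennreal_leI) (simp add: mult.commute)
    also have "\<dots> = ennreal (1 / N) * ennreal (\<Sum>z\<in>Z. (\<bar>g z y\<bar> / a) powr p y)"
      using N1 by (intro ennreal_mult') auto
    also have "ennreal (\<Sum>z\<in>Z. (\<bar>g z y\<bar> / a) powr p y) = (\<Sum>z\<in>Z. ennreal ((\<bar>g z y\<bar> / a) powr p y))"
      by (rule sum_ennreal[symmetric]) simp
    finally show ?thesis .
  qed
  have "modular p h (N^2 * a) \<le> (\<integral>\<^sup>+ y. ennreal (1 / N) * (\<Sum>z\<in>Z. ennreal ((\<bar>g z y\<bar> / a) powr p y)) \<partial>lebesgue)"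
    unfolding modular_def using pointwise by (rule nn_integral_mono)
  also have "\<dots> = ennreal (1 / N) * (\<Sum>z\<in>Z. modular p (g z) a)"
    unfolding modular_def using gm pm
    by (subst nn_integral_cmult, measurable, subst nn_integral_sum) auto
  finally show ?thesis unfolding N_def .
qed

lemma var_norm_sum_le:
  fixes h :: "'a::euclidean_space \<Rightarrow> real" and g :: "'b \<Rightarrow> 'a \<Rightarrow> real"
  assumes Z: "finite Z" "Z \<noteq> {}" and p1: "\<And>x. 1 \<le> p x" and pm: "p \<in> borel_measurable lebesgue"
    and gm: "\<And>z. z \<in> Z \<Longrightarrow> g z \<in> borel_measurable lebesgue"
    and h: "\<And>y. \<bar>h y\<bar> \<le> (\<Sum>z\<in>Z. \<bar>g z y\<bar>)"
  shows "var_norm p h \<le> ennreal (real (card Z)^2) * (\<Sum>z\<in>Z. var_norm p (g z))"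
proof (rule ennreal_le_epsilon)
  fix e :: real
  define N where "N = real (card Z)"
  have N1: "N \<ge> 1" using Z unfolding N_def by (simp add: Suc_leI card_gt_0_iff)
  have p0: "\<And>x. 0 \<le> p x" using p1 by (meson order.trans zero_le_one)
  assume "ennreal (real (card Z)^2) * (\<Sum>z\<in>Z. var_norm p (g z)) < top" and e: "0 < e"
  then obtain S where S: "(\<Sum>z\<in>Z. var_norm p (g z)) = ennreal S" "0 \<le> S"
    using N1 unfolding N_def by (cases "\<Sum>z\<in>Z. var_norm p (g z)" rule: ennreal_cases)
      (auto simp: ennreal_mult_eq_top_iff)
  define a where "a = S + e / N^2"
  have a: "a > 0" unfolding a_def using S e N1 by (auto intro!: add_nonneg_pos)
  have modular_g: "modular p (g z) a \<le> 1" if "z \<in> Z" for z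
  proof (rule var_norm_less_imp_modular_le[OF _ p0])
    have "var_norm p (g z) \<le> ennreal S" unfolding S(1)[symmetric] using that Z by (intro member_le_sum) auto
    also have "\<dots> < ennreal a" unfolding a_def using e N1 S by (subst ennreal_less_iff) auto
    finally show "var_norm p (g z) < ennreal a" .
  qed
  have "modular p h (N^2 * a) \<le> ennreal (1 / N) * (\<Sum>z\<in>Z. modular p (g z) a)"
    unfolding N_def by (rule modular_le_average_modular[OF Z p1 pm gm h a])
  also have "\<dots> \<le> ennreal (1 / N) * (\<Sum>z\<in>Z. 1)"
    using modular_g by (intro mult_left_mono sum_mono) auto
  also have "\<dots> = 1" using N1 unfolding N_def
    by (simp add: ennreal_of_nat_eq_real_of_nat ennreal_mult[symmetric])
  finally have "var_norm p h \<le> ennreal (N^2 * a)"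
    using a N1 by (intro var_norm_le) auto
  also have "N^2 * a = N^2 * S + e" unfolding a_def using N1 by (simp add: field_simps)
  also have "ennreal (N^2 * S + e) = ennreal (N^2) * ennreal S + ennreal e"
    using S e by (simp add: ennreal_mult)
  finally show "var_norm p h \<le> ennreal (real (card Z)^2) * (\<Sum>z\<in>Z. var_norm p (g z)) + ennreal e"
    unfolding S(1) N_def .
qed

lemma var_norm_le_of_eventually_le:
  fixes h :: "'a::euclidean_space \<Rightarrow> real" and g :: "nat \<Rightarrow> 'a \<Rightarrow> real"
  assumes gm: "\<And>n. g n \<in> borel_measurable lebesgue" and pm: "p \<in> borel_measurable lebesgue"
    and p0: "\<And>x. 0 \<le> p x"
    and ev: "\<And>y. eventually (\<lambda>n. \<bar>h y\<bar> \<le> \<bar>g n y\<bar>) sequentially"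
    and bound: "\<And>n. var_norm p (g n) \<le> c"
  shows "var_norm p h \<le> c"
proof (cases c)
  case (real c')
  show ?thesis
  proof (rule ennreal_le_epsilon)
    fix e :: real assume e: "0 < e"
    define b where "b = c' + e"
    have modular_g: "modular p (g n) b \<le> 1" for n
      using bound[of n] real e unfolding b_def
      by (intro var_norm_less_imp_modular_le[OF _ p0]) (auto intro: le_less_trans simp: ennreal_less_iff)
    have "ennreal ((\<bar>h y\<bar> / b) powr p y) \<le> liminf (\<lambda>n. ennreal ((\<bar>g n y\<bar> / b) powr p y))" for y
    proof (intro Liminf_bounded)
      show "eventually (\<lambda>n. ennreal ((\<bar>h y\<bar> / b) powr p y) \<le> ennreal ((\<bar>g n y\<bar> / b) powr p y)) sequentially"
        using ev[of y] proof eventually_elim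
        case (elim n)
        then show ?case using real e p0 unfolding b_def
          by (intro ennreal_leI powr_mono2 divide_right_mono) auto
      qed
    qed
    then have "modular p h b \<le> (\<integral>\<^sup>+ y. liminf (\<lambda>n. ennreal ((\<bar>g n y\<bar> / b) powr p y)) \<partial>lebesgue)"
      unfolding modular_def by (intro nn_integral_mono)
    also have "\<dots> \<le> liminf (\<lambda>n. modular p (g n) b)"
    proof -
      note [measurable] = gm pm
      show ?thesis unfolding modular_def by (intro nn_integral_liminf) measurable
    qed
    also have "\<dots> \<le> 1" using modular_g by (intro Liminf_le) auto
    finally have "var_norm p h \<le> ennreal b"
      using e real unfolding b_def by (intro var_norm_le) auto
    then show "var_norm p h \<le> c + ennreal e"
      unfolding b_def real using e real by simp
  qed
qed simp

lemma lebesgue_measurable_ball [measurable]: "ball x r \<in> sets lebesgue"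
  by (intro sets_completionI_sets) auto

lemma closed_var_norm_ball_le:
  fixes f p :: "'a::euclidean_space \<Rightarrow> real"
  assumes fm: "f \<in> borel_measurable lebesgue" and pm: "p \<in> borel_measurable lebesgue"
    and p0: "\<And>x. 0 \<le> p x"
  shows "closed {x. var_norm p (\<lambda>y. f y * indicator (ball x s) y) \<le> c}"
  unfolding closed_sequential_limits
proof (intro allI impI, elim conjE)
  fix X l assume X: "\<forall>n. X n \<in> {x. var_norm p (\<lambda>y. f y * indicator (ball x s) y) \<le> c}"
    and lim: "X \<longlonglongrightarrow> l"
  have ev: "eventually (\<lambda>n. \<bar>f y * indicator (ball l s) y\<bar> \<le> \<bar>f y * indicator (ball (X n) s) y\<bar>) sequentially"
    for y
  proof (cases "y \<in> ball l s")
    case True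
    then have "eventually (\<lambda>n. dist (X n) l < s - dist l y) sequentially"
      using lim by (intro tendstoD) auto
    then show ?thesis
    proof eventually_elim
      case (elim n)
      have "dist (X n) y \<le> dist (X n) l + dist l y" by (rule dist_triangle)
      then have "y \<in> ball (X n) s" using elim by simp
      then show ?case using True by simp
    qed
  qed simp
  have gm: "(\<lambda>y. f y * indicator (ball (X n) s) y) \<in> borel_measurable lebesgue" for n
    using fm by measurable
  have bound: "var_norm p (\<lambda>y. f y * indicator (ball (X n) s) y) \<le> c" for n
    using X by auto
  have "var_norm p (\<lambda>y. f y * indicator (ball l s) y) \<le> c"
    by (rule var_norm_le_of_eventually_le[OF gm pm p0 ev bound])
  then show "l \<in> {x. var_norm p (\<lambda>y. f y * indicator (ball x s) y) \<le> c}" by simp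
qed

lemma borel_measurable_var_norm_ball:
  fixes f p :: "'a::euclidean_space \<Rightarrow> real"
  assumes "f \<in> borel_measurable lebesgue" "p \<in> borel_measurable lebesgue" "\<And>x. 0 \<le> p x"
  shows "(\<lambda>x. var_norm p (\<lambda>y. f y * indicator (ball x s) y)) \<in> borel_measurable borel"
  by (rule borel_measurableI_le) (use closed_var_norm_ball_le[OF assms] in auto)

section \<open>The constant-exponent \<open>L\<^sup>q\<close> norm\<close>

lemma nn_integral_lebesgue_translate:
  fixes F :: "'a::euclidean_space \<Rightarrow> ennreal"
  assumes [measurable]: "F \<in> borel_measurable borel"
  shows "(\<integral>\<^sup>+ x. F (x + z) \<partial>lebesgue) = (\<integral>\<^sup>+ x. F x \<partial>lebesgue)"
proof -
  have "(\<integral>\<^sup>+ x. F x \<partial>lebesgue) = (\<integral>\<^sup>+ x. F x \<partial>distr lborel borel ((+) z))"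
    by (simp add: nn_integral_completion lborel_distr_plus)
  also have "\<dots> = (\<integral>\<^sup>+ x. F (z + x) \<partial>lborel)" by (intro nn_integral_distr) auto
  finally show ?thesis by (simp add: nn_integral_completion add.commute)
qed

lemma AE_lebesgue_translate:
  fixes F :: "'a::euclidean_space \<Rightarrow> ennreal"
  assumes [measurable]: "F \<in> borel_measurable borel" and "AE y in lebesgue. F y \<le> c"
  shows "AE x in lebesgue. F (x + z) \<le> c"
proof -
  have "AE y in lborel. F y \<le> c" using assms(2) by (simp add: AE_completion_iff)
  then have "AE y in distr lborel borel ((+) z). F y \<le> c" by (subst lborel_distr_plus)
  then show ?thesis by (simp add: AE_distr_iff AE_completion_iff add.commute)
qed

lemma one_le_enn2real: "1 \<le> q \<Longrightarrow> q \<noteq> top \<Longrightarrow> 1 \<le> enn2real q"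
  using enn2real_mono[of 1 q] by (simp add: top.not_eq_extremum)

lemma Lq_norm_finite:
  "q \<noteq> top \<Longrightarrow> Lq_norm q G = ennpow (\<integral>\<^sup>+ x. ennpow (G x) (enn2real q) \<partial>lebesgue) (1 / enn2real q)"
  by (simp add: Lq_norm_def)

lemma Lq_norm_mono:
  assumes "G \<in> borel_measurable lebesgue" "\<And>x. G x \<le> H x" "1 \<le> q"
  shows "Lq_norm q G \<le> Lq_norm q H"
  using assms one_le_enn2real[of q] unfolding Lq_norm_def
  by (auto intro!: esssup_mono ennpow_mono nn_integral_mono)

lemma Lq_norm_cmult_le:
  assumes Gm [measurable]: "G \<in> borel_measurable lebesgue" and c: "0 < c" and q: "1 \<le> q"
  shows "Lq_norm q (\<lambda>x. ennreal c * G x) \<le> ennreal c * Lq_norm q G"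
proof (cases "q = top")
  case True
  have "(\<lambda>x. ennreal c * G x) \<in> borel_measurable lebesgue" by measurable
  moreover have "AE x in lebesgue. ennreal c * G x \<le> ennreal c * esssup lebesgue G"
    using esssup_AE[of G lebesgue] by eventually_elim (rule mult_left_mono, auto)
  ultimately have "esssup lebesgue (\<lambda>x. ennreal c * G x) \<le> ennreal c * esssup lebesgue G"
    by (rule esssup_I)
  then show ?thesis using True unfolding Lq_norm_def by simp
next
  case False
  define q' where "q' = enn2real q"
  have q': "1 \<le> q'" unfolding q'_def using one_le_enn2real q False by auto
  have "(\<integral>\<^sup>+ x. ennpow (ennreal c * G x) q' \<partial>lebesgue)
      = (\<integral>\<^sup>+ x. ennreal (c powr q') * ennpow (G x) q' \<partial>lebesgue)"
    using c q' by (intro nn_integral_cong ennpow_cmult) auto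
  also have "\<dots> = ennreal (c powr q') * (\<integral>\<^sup>+ x. ennpow (G x) q' \<partial>lebesgue)"
    using Gm by (intro nn_integral_cmult borel_measurable_ennpow)
  finally have "Lq_norm q (\<lambda>x. ennreal c * G x)
      = ennpow (ennreal (c powr q') * (\<integral>\<^sup>+ x. ennpow (G x) q' \<partial>lebesgue)) (1 / q')"
    unfolding Lq_norm_finite[OF False] q'_def by simp
  also have "\<dots> = ennreal ((c powr q') powr (1 / q')) * Lq_norm q G"
    unfolding Lq_norm_finite[OF False] q'_def[symmetric] using c q' by (intro ennpow_cmult) auto
  also have "(c powr q') powr (1 / q') = c" using c q' by (simp add: powr_powr)
  finally show ?thesis by simp
qed

lemma esssup_sum_translates_le:
  fixes G :: "'a::euclidean_space \<Rightarrow> ennreal"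
  assumes Gm [measurable]: "G \<in> borel_measurable borel" and Z: "finite Z"
  shows "esssup lebesgue (\<lambda>x. \<Sum>z\<in>Z. G (x + z)) \<le> of_nat (card Z) * esssup lebesgue G"
proof -
  have "AE x in lebesgue. \<forall>z\<in>Z. G (x + z) \<le> esssup lebesgue G"
    using Z by (intro AE_finite_allI AE_lebesgue_translate[OF Gm]) (auto simp: esssup_AE)
  then have "AE x in lebesgue. (\<Sum>z\<in>Z. G (x + z)) \<le> of_nat (card Z) * esssup lebesgue G"
    by eventually_elim (intro sum_bounded_above, blast)
  then show ?thesis by (intro esssup_I) (auto simp: measurable_completion)
qed

lemma nn_integral_ennpow_sum_translates_le:
  fixes G :: "'a::euclidean_space \<Rightarrow> ennreal"
  assumes Gm [measurable]: "G \<in> borel_measurable borel" and Z: "finite Z" "Z \<noteq> {}" and s: "0 < s"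
  shows "(\<integral>\<^sup>+ x. ennpow (\<Sum>z\<in>Z. G (x + z)) s \<partial>lebesgue)
    \<le> ennreal (real (card Z) powr s * real (card Z)) * (\<integral>\<^sup>+ x. ennpow (G x) s \<partial>lebesgue)"
proof -
  define N where "N = real (card Z)"
  define I where "I = (\<integral>\<^sup>+ x. ennpow (G x) s \<partial>lebesgue)"
  have "(\<integral>\<^sup>+ x. ennpow (\<Sum>z\<in>Z. G (x + z)) s \<partial>lebesgue)
      \<le> (\<integral>\<^sup>+ x. ennreal (N powr s) * (\<Sum>z\<in>Z. ennpow (G (x + z)) s) \<partial>lebesgue)"
    unfolding N_def using Z s by (intro nn_integral_mono ennpow_sum_le_card_powr_sum) auto
  also have "\<dots> = ennreal (N powr s) * (\<Sum>z\<in>Z. \<integral>\<^sup>+ x. ennpow (G (x + z)) s \<partial>lebesgue)"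
  proof -
    have "(\<lambda>x. ennpow (G (x + z)) s) \<in> borel_measurable lebesgue" for z
      by (rule measurable_completion) measurable
    then show ?thesis by (simp add: nn_integral_cmult nn_integral_sum del: sum_ennreal)
  qed
  also have "(\<Sum>z\<in>Z. \<integral>\<^sup>+ x. ennpow (G (x + z)) s \<partial>lebesgue) = (\<Sum>z\<in>Z. I)"
    unfolding I_def by (intro sum.cong refl nn_integral_lebesgue_translate[of "\<lambda>y. ennpow (G y) s"]) measurable
  also have "(\<Sum>z\<in>Z. I) = ennreal N * I"
    unfolding N_def by (simp add: ennreal_of_nat_eq_real_of_nat)
  also have "ennreal (N powr s) * (ennreal N * I) = ennreal (N powr s * N) * I"
    unfolding N_def by (metis ennreal_mult mult.assoc powr_ge_zero of_nat_0_le_iff)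
  finally show ?thesis unfolding N_def I_def .
qed

lemma Lq_norm_sum_translates_le:
  fixes G :: "'a::euclidean_space \<Rightarrow> ennreal"
  assumes Gm [measurable]: "G \<in> borel_measurable borel" and Z: "finite Z" "Z \<noteq> {}" and q: "1 \<le> q"
  shows "Lq_norm q (\<lambda>x. \<Sum>z\<in>Z. G (x + z)) \<le> ennreal (real (card Z)^2) * Lq_norm q G"
proof -
  define N where "N = real (card Z)"
  have N1: "N \<ge> 1" using Z unfolding N_def by (simp add: Suc_leI card_gt_0_iff)
  show ?thesis
  proof (cases "q = top")
    case True
    have "esssup lebesgue (\<lambda>x. \<Sum>z\<in>Z. G (x + z)) \<le> ennreal N * esssup lebesgue G"
      using esssup_sum_translates_le[OF Gm Z(1)] unfolding N_def by (simp add: ennreal_of_nat_eq_real_of_nat)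
    also have "\<dots> \<le> ennreal (N^2) * esssup lebesgue G"
      using N1 by (intro mult_right_mono ennreal_leI) (auto simp: power2_eq_square)
    finally show ?thesis using True unfolding Lq_norm_def N_def by simp
  next
    case False
    define q' where "q' = enn2real q"
    have q': "1 \<le> q'" unfolding q'_def using one_le_enn2real q False by auto
    have "Lq_norm q (\<lambda>x. \<Sum>z\<in>Z. G (x + z))
        \<le> ennpow (ennreal (N powr q' * N) * (\<integral>\<^sup>+ x. ennpow (G x) q' \<partial>lebesgue)) (1 / q')"
      unfolding Lq_norm_finite[OF False] q'_def[symmetric] N_def using Z q'
      by (intro ennpow_mono nn_integral_ennpow_sum_translates_le[OF Gm]) auto
    also have "\<dots> = ennreal (N * N powr (1 / q')) * Lq_norm q G"
      unfolding Lq_norm_finite[OF False] q'_def[symmetric] using N1 q'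
      by (simp add: ennpow_cmult powr_mult powr_powr)
    also have "\<dots> \<le> ennreal (N^2) * Lq_norm q G"
      using N1 q' powr_mono[of "1 / q'" 1 N]
      by (intro mult_right_mono ennreal_leI) (auto simp: power2_eq_square)
    finally show ?thesis unfolding N_def .
  qed
qed

section \<open>Amalgam norms at different radii\<close>

lemma var_norm_ball_le_sum_translates:
  fixes f p :: "'a::euclidean_space \<Rightarrow> real"
  assumes fm: "f \<in> borel_measurable lebesgue" and pm: "p \<in> borel_measurable lebesgue"
    and p1: "\<And>x. 1 \<le> p x"
    and Z: "finite Z" "Z \<noteq> {}" and cover: "cball 0 t \<subseteq> (\<Union>z\<in>Z. ball z s)"
  shows "var_norm p (\<lambda>y. f y * indicator (ball x t) y)
    \<le> ennreal (real (card Z)^2) * (\<Sum>z\<in>Z. var_norm p (\<lambda>y. f y * indicator (ball (x + z) s) y))"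
proof (rule var_norm_sum_le[OF Z p1 pm])
  fix y
  show "\<bar>f y * indicator (ball x t) y\<bar> \<le> (\<Sum>z\<in>Z. \<bar>f y * indicator (ball (x + z) s) y\<bar>)"
  proof (cases "y \<in> ball x t")
    case True
    then have "y - x \<in> cball 0 t" by (simp add: dist_norm norm_minus_commute)
    then obtain z where z: "z \<in> Z" "y - x \<in> ball z s" using cover by blast
    then have "y \<in> ball (x + z) s" by (simp add: dist_norm algebra_simps)
    then have "\<bar>f y * indicator (ball x t) y\<bar> = \<bar>f y * indicator (ball (x + z) s) y\<bar>"
      using True by simp
    also have "\<dots> \<le> (\<Sum>z\<in>Z. \<bar>f y * indicator (ball (x + z) s) y\<bar>)"
      using z(1) Z by (intro member_le_sum) auto
    finally show ?thesis .
  qed (simp add: sum_nonneg)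
qed (use fm in measurable)

lemma amalg_norm_change_radius:
  fixes p :: "'a::euclidean_space \<Rightarrow> real"
  assumes pm: "p \<in> borel_measurable lebesgue" and p1: "\<And>x. 1 \<le> p x" and q: "1 \<le> q"
    and "0 < s" "0 \<le> t"
  shows "\<exists>K>0. \<forall>f \<in> borel_measurable lebesgue. amalg_norm p q t f \<le> ennreal K * amalg_norm p q s f"
proof -
  have p0: "\<And>x. 0 \<le> p x" using p1 by (meson order.trans zero_le_one)
  have cover: "cball (0::'a) t \<subseteq> (\<Union>z\<in>cball 0 t. ball z s)" using \<open>0 < s\<close> by auto
  have "\<And>z. z \<in> cball 0 t \<Longrightarrow> open (ball z s)" by simp
  then obtain Z where "Z \<subseteq> cball 0 t" and Z: "finite Z" "cball (0::'a) t \<subseteq> (\<Union>z\<in>Z. ball z s)"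
    using compactE_image[OF compact_cball _ cover] by blast
  have "0 \<in> cball (0::'a) t" using \<open>0 \<le> t\<close> by simp
  then have Zne: "Z \<noteq> {}" using Z(2) by blast
  define N where "N = real (card Z)"
  have N: "N^2 > 0" using Z(1) Zne unfolding N_def by (simp add: card_gt_0_iff)
  show ?thesis
  proof (intro exI[of _ "N^2 * N^2"] conjI ballI)
    fix f :: "'a \<Rightarrow> real" assume fm: "f \<in> borel_measurable lebesgue"
    define G where "G r x = var_norm p (\<lambda>y. f y * indicator (ball x r) y)" for r x
    have Gm [measurable]: "G r \<in> borel_measurable borel" for r
      unfolding G_def using fm pm p0 by (rule borel_measurable_var_norm_ball)
    have Gt: "G t \<in> borel_measurable lebesgue"
      by (intro measurable_completion) simp
    have translates: "(\<lambda>x. \<Sum>z\<in>Z. G s (x + z)) \<in> borel_measurable lebesgue"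
      by (intro measurable_completion) simp
    have cover_bound: "G t x \<le> ennreal (N^2) * (\<Sum>z\<in>Z. G s (x + z))" for x
      unfolding G_def N_def by (rule var_norm_ball_le_sum_translates[OF fm pm p1 Z(1) Zne Z(2)])
    have "Lq_norm q (G t) \<le> Lq_norm q (\<lambda>x. ennreal (N^2) * (\<Sum>z\<in>Z. G s (x + z)))"
      by (rule Lq_norm_mono[OF Gt cover_bound q])
    also have "\<dots> \<le> ennreal (N^2) * Lq_norm q (\<lambda>x. \<Sum>z\<in>Z. G s (x + z))"
      by (rule Lq_norm_cmult_le[OF translates N q])
    also have "\<dots> \<le> ennreal (N^2) * (ennreal (N^2) * Lq_norm q (G s))"
      unfolding N_def by (intro mult_left_mono Lq_norm_sum_translates_le[OF Gm Z(1) Zne q]) simp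
    also have "\<dots> = ennreal (N^2 * N^2) * Lq_norm q (G s)"
      unfolding ennreal_mult[OF zero_le_power2 zero_le_power2] by (simp only: mult.assoc)
    finally show "amalg_norm p q t f \<le> ennreal (N^2 * N^2) * amalg_norm p q s f"
      unfolding amalg_norm_def G_def .
  qed (use N in simp)
qed

theorem lemma3p1:
  fixes p :: "'a::euclidean_space \<Rightarrow> real" and q \<alpha> :: ennreal and \<rho> r :: real
  assumes "var_exp p"
    and "1 \<le> q" and "1 \<le> \<alpha>"
    and "\<forall>x. ennreal (p x) \<le> \<alpha>" and "\<alpha> \<le> q"
    and "\<rho> > 0" and "r > 0"
  shows "\<exists>C1>0. \<exists>C2>0. \<forall>f \<in> borel_measurable lebesgue.
           ennreal C1 * amalg_norm p q (\<rho> * r) f \<le> amalg_norm p q r f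
         \<and> amalg_norm p q r f \<le> ennreal C2 * amalg_norm p q (\<rho> * r) f"
proof -
  have pm: "p \<in> borel_measurable lebesgue" and p1: "\<And>x. 1 \<le> p x"
    using assms(1) unfolding var_exp_def by auto
  obtain K1 where K1: "K1 > 0" "\<And>f. f \<in> borel_measurable lebesgue \<Longrightarrow>
      amalg_norm p q (\<rho> * r) f \<le> ennreal K1 * amalg_norm p q r f"
    using amalg_norm_change_radius[OF pm p1 \<open>1 \<le> q\<close>, of r "\<rho> * r"] assms by auto
  obtain K2 where K2: "K2 > 0" "\<And>f. f \<in> borel_measurable lebesgue \<Longrightarrow>
      amalg_norm p q r f \<le> ennreal K2 * amalg_norm p q (\<rho> * r) f"
    using amalg_norm_change_radius[OF pm p1 \<open>1 \<le> q\<close>, of "\<rho> * r" r] assms by auto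
  have "ennreal (1 / K1) * amalg_norm p q (\<rho> * r) f \<le> amalg_norm p q r f"
    if "f \<in> borel_measurable lebesgue" for f
  proof -
    have "ennreal (1 / K1) * amalg_norm p q (\<rho> * r) f \<le> ennreal (1 / K1) * (ennreal K1 * amalg_norm p q r f)"
      using K1 that by (intro mult_left_mono) auto
    also have "\<dots> = amalg_norm p q r f"
      using K1 by (simp add: mult.assoc[symmetric] ennreal_mult[symmetric])
    finally show ?thesis .
  qed
  then show ?thesis using K1 K2 by (intro exI[of _ "1 / K1"] exI[of _ K2]) auto
qed

end
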